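(* Let $n\ge 2$ and regard $\ell_{T(A_n)}$ as a random variable on $A_n$ with the uniform distribution. Then $$E[\ell_{T(A_n)}]=n-H_n-\tfrac12,\qquad \mathrm{Var}[\ell_{T(A_n)}]=H_n-H_{n,2}-\tfrac14.$$
   Context: $A_n$ is the alternating group on $\{1,\dots,n\}$, $T(A_n)=\{(1\,2)(i\,j)\mid 1\le i<j\le n\}$, and $\ell_{T(A_n)}(v)=\min\{r\ge 0\mid v=t_1\cdots t_r,\ t_i\in T(A_n)\}$. $E[s]=\frac{1}{|A_n|}\sum_{v\in A_n}s(v)$ and $\mathrm{Var}[s]=E[s^2]-E[s]^2$. $H_n=\sum_{i=1}^n \frac1i$ and $H_{n,2}=\sum_{i=1}^n\frac{1}{i^2}$. *)

theory Defs
  imports "HOL-Combinatorics.Combinatorics" "HOL-Analysis.Harmonic_Numbers"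
begin

definition alt_group :: "nat \<Rightarrow> (nat \<Rightarrow> nat) set" where
  "alt_group n = {p. p permutes {1..n} \<and> evenperm p}"

definition T_alt :: "nat \<Rightarrow> (nat \<Rightarrow> nat) set" where
  "T_alt n = {Transposition.transpose 1 2 \<circ> Transposition.transpose i j | i j. 1 \<le> i \<and> i < j \<and> j \<le> n}"

definition len_T :: "nat \<Rightarrow> (nat \<Rightarrow> nat) \<Rightarrow> nat" where
  "len_T n v = (LEAST r. \<exists>ts. length ts = r \<and> set ts \<subseteq> T_alt n \<and> v = foldr (\<circ>) ts id)"

definition E_alt :: "nat \<Rightarrow> ((nat \<Rightarrow> nat) \<Rightarrow> real) \<Rightarrow> real" where
  "E_alt n s = (1 / real (card (alt_group n))) * (\<Sum>v\<in>alt_group n. s v)"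

definition Var_alt :: "nat \<Rightarrow> ((nat \<Rightarrow> nat) \<Rightarrow> real) \<Rightarrow> real" where
  "Var_alt n s = E_alt n (\<lambda>v. (s v)^2) - (E_alt n s)^2"

definition H2 :: "nat \<Rightarrow> real" where
  "H2 n = (\<Sum>i=1..n. 1 / (real i)^2)"

end

theory Submission
  imports Defs
begin

text \<open>
  A generator (1 2)(i j) is a transposition up to the factor (1 2). Sort a permutation from the
  top, fixing the points n, n-1, ..., 3 by one transposition each, and count the nontrivial
  steps: this count ignores a left factor (1 2) and changes by at most one under a transposition,
  so it bounds the word length from below; for an even permutation every nontrivial step is
  realised by one generator, the stray (1 2) being absorbed by the rest of the word. So the
  length is the number of k in {3..n} at which the step is nontrivial. For a uniform random
  permutation the point swapped into position k is uniform among k choices, independently of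
  the other steps and, once n >= 2, of the parity. Hence the length is a sum of independent
  Bernoulli variables of parameter 1 - 1/k, k = 3..n, with mean sum (1 - 1/k) and variance
  sum (1/k)(1 - 1/k).
\<close>

abbreviation tr :: "nat \<Rightarrow> nat \<Rightarrow> nat \<Rightarrow> nat" where
  "tr \<equiv> Transposition.transpose"

lemma transpose_comp_transpose:
  "tr i j \<circ> tr a b = tr (tr i j a) (tr i j b) \<circ> tr i j"
  by (auto simp: fun_eq_iff Transposition.transpose_def)

lemma transpose_comp_transpose_comp:
  assumes "a \<noteq> i" "a \<noteq> j"
  shows "tr i j \<circ> (tr a b \<circ> q) = tr a (tr i j b) \<circ> (tr i j \<circ> q)"
  using assms by (auto simp: fun_eq_iff Transposition.transpose_def)

lemma evenperm_transpose_comp: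
  "permutation p \<Longrightarrow> evenperm (tr a b \<circ> p) \<longleftrightarrow> (a = b) = evenperm p"
  by (simp add: evenperm_comp permutation_swap_id evenperm_swap)

lemma permutes_1_2: "{p. p permutes {1..2::nat}} = {id, tr 1 2}"
proof -
  have "{1..2::nat} = {1, 2}"
    by auto
  then show ?thesis
    by (simp only: permutes_doubleton_iff) auto
qed

text \<open>Positions 1 and 2 are never sorted: they are handled by the free factor (1 2).\<close>
fun sort_steps :: "nat \<Rightarrow> (nat \<Rightarrow> nat) \<Rightarrow> nat" where
  "sort_steps 0 p = 0"
| "sort_steps (Suc n) p =
     (if n < 2 then 0 else sort_steps n (tr (Suc n) (p (Suc n)) \<circ> p) + of_bool (p (Suc n) \<noteq> Suc n))"

lemma sort_steps_Suc:
  "2 \<le> n \<Longrightarrow>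
    sort_steps (Suc n) p = sort_steps n (tr (Suc n) (p (Suc n)) \<circ> p) + of_bool (p (Suc n) \<noteq> Suc n)"
  by simp

declare sort_steps.simps(2) [simp del]

lemma sort_steps_le_2: "n \<le> 2 \<Longrightarrow> sort_steps n p = 0"
  by (cases n) (auto simp: sort_steps.simps)

lemma sort_steps_id: "sort_steps n id = 0"
  by (induction n) (auto simp: sort_steps.simps)

lemma sort_steps_transpose_top:
  assumes "2 \<le> n" "q (Suc n) = Suc n"
  shows "sort_steps (Suc n) (tr (Suc n) b \<circ> q) = sort_steps n q + of_bool (b \<noteq> Suc n)"
proof -
  have "tr (Suc n) b \<circ> (tr (Suc n) b \<circ> q) = q"
    by (simp flip: comp_assoc)
  with assms show ?thesis
    by (simp add: sort_steps_Suc)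
qed

lemma sort_steps_top_decomp:
  assumes "2 \<le> n"
  obtains q where "q (Suc n) = Suc n" "p = tr (Suc n) (p (Suc n)) \<circ> q"
    "sort_steps (Suc n) p = sort_steps n q + of_bool (p (Suc n) \<noteq> Suc n)"
proof (rule that)
  show "(tr (Suc n) (p (Suc n)) \<circ> p) (Suc n) = Suc n"
    "p = tr (Suc n) (p (Suc n)) \<circ> (tr (Suc n) (p (Suc n)) \<circ> p)"
    by (simp_all flip: comp_assoc)
qed (use assms in \<open>rule sort_steps_Suc\<close>)

lemma sort_steps_transpose_low:
  assumes "i \<le> 2" "j \<le> 2"
  shows "sort_steps n (tr i j \<circ> p) = sort_steps n p"
proof (induction n arbitrary: p)
  case (Suc n)
  show ?case
  proof (cases "n < 2")
    case False
    obtain q where q: "q (Suc n) = Suc n" "p = tr (Suc n) (p (Suc n)) \<circ> q"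
      and gp: "sort_steps (Suc n) p = sort_steps n q + of_bool (p (Suc n) \<noteq> Suc n)"
      using False by (metis not_less sort_steps_top_decomp)
    have ij: "Suc n \<noteq> i" "Suc n \<noteq> j"
      using False assms by auto
    have "sort_steps (Suc n) (tr i j \<circ> p)
        = sort_steps (Suc n) (tr (Suc n) (tr i j (p (Suc n))) \<circ> (tr i j \<circ> q))"
      by (subst q(2)) (simp add: transpose_comp_transpose_comp[OF ij])
    also have "\<dots> = sort_steps n q + of_bool (p (Suc n) \<noteq> Suc n)"
      using False ij q(1) by (simp add: sort_steps_transpose_top Suc.IH transpose_eq_iff)
    also have "\<dots> = sort_steps (Suc n) p"
      by (rule gp[symmetric])
    finally show ?thesis .
  qed (simp add: sort_steps_le_2)
qed simp

lemma sort_steps_transpose_top_le: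
  assumes "2 \<le> n" "m \<noteq> Suc n"
    and IH: "\<And>i j q. sort_steps n (tr i j \<circ> q) \<le> sort_steps n q + 1"
  shows "sort_steps (Suc n) (tr m (Suc n) \<circ> p) \<le> sort_steps (Suc n) p + 1"
proof -
  define N k where "N = Suc n" and "k = p N"
  obtain q where q: "q N = N" "p = tr N k \<circ> q"
    and gp: "sort_steps N p = sort_steps n q + of_bool (k \<noteq> N)"
    using assms(1) unfolding N_def k_def by (rule sort_steps_top_decomp)
  have top: "sort_steps N (tr N b \<circ> q') = sort_steps n q' + of_bool (b \<noteq> N)"
    if "q' N = N" for b q'
    using assms(1) that unfolding N_def by (rule sort_steps_transpose_top)
  consider "k = N" | "k = m" | "k \<noteq> N" "k \<noteq> m"
    by blast
  then have "sort_steps N (tr m N \<circ> p) \<le> sort_steps N p + 1"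
  proof cases
    case 1
    then have "tr m N \<circ> p = tr N m \<circ> q"
      using q(2) by (simp add: transpose_commute)
    then show ?thesis
      using 1 assms(2) q(1) gp top[of q m] by (simp add: N_def)
  next
    case 2
    then have "tr m N \<circ> p = q"
      using q(2) by (simp add: transpose_commute flip: comp_assoc)
    then show ?thesis
      using q(1) gp top[of q N] by simp
  next
    case 3
    then have "tr N k \<circ> tr m k = tr m N \<circ> tr N k"
      using assms(2) transpose_comp_transpose[of N k m k] by (simp add: N_def)
    then have "tr m N \<circ> p = tr N k \<circ> (tr m k \<circ> q)"
      using q(2) by (simp flip: comp_assoc)
    moreover have "(tr m k \<circ> q) N = N"
      using 3 q(1) assms(2) by (simp add: N_def)
    ultimately show ?thesis
      using 3 IH[of m k q] top[of "tr m k \<circ> q" k] gp by (simp del: comp_apply)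
  qed
  then show ?thesis
    unfolding N_def .
qed

lemma sort_steps_transpose_le: "sort_steps n (tr i j \<circ> p) \<le> sort_steps n p + 1"
proof (induction n arbitrary: i j p)
  case (Suc n)
  show ?case
  proof (cases "n < 2")
    case False
    define N k where "N = Suc n" and "k = p N"
    obtain q where q: "q N = N" "p = tr N k \<circ> q"
    and gp: "sort_steps N p = sort_steps n q + of_bool (k \<noteq> N)"
      using False unfolding N_def k_def by (metis not_less sort_steps_top_decomp)
    consider "N \<noteq> i" "N \<noteq> j" | m where "tr i j = tr m N" "m \<noteq> N" | "i = j"
      by (metis transpose_commute)
    then show ?thesis
    proof cases
      case 1
      then have "sort_steps N (tr i j \<circ> p)
          = sort_steps n (tr i j \<circ> q) + of_bool (tr i j k \<noteq> N)"
        using False q unfolding N_def by (simp add: transpose_comp_transpose_comp sort_steps_transpose_top)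
      also have "\<dots> \<le> sort_steps N p + 1"
        using 1 Suc.IH[of i j q] by (simp add: gp transpose_eq_iff del: comp_apply)
      finally show ?thesis unfolding N_def .
    next
      case (2 m)
      have "sort_steps (Suc n) (tr m (Suc n) \<circ> p) \<le> sort_steps (Suc n) p + 1"
        using False 2(2) unfolding N_def by (intro sort_steps_transpose_top_le Suc.IH) simp_all
      then show ?thesis
        unfolding 2(1) N_def .
    qed simp
  qed (simp add: sort_steps_le_2)
qed simp

lemma sort_steps_le_length:
  "set ts \<subseteq> T_alt n \<Longrightarrow> sort_steps n (foldr (\<circ>) ts id) \<le> length ts"
proof (induction ts)
  case (Cons t ts)
  then obtain i j where t: "t = tr 1 2 \<circ> tr i j"
    by (auto simp: T_alt_def)
  have "sort_steps n (foldr (\<circ>) (t # ts) id) = sort_steps n (tr i j \<circ> foldr (\<circ>) ts id)"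
    using sort_steps_transpose_low[of 1 2] by (simp add: t comp_assoc)
  also have "\<dots> \<le> sort_steps n (foldr (\<circ>) ts id) + 1"
    by (rule sort_steps_transpose_le)
  finally have "sort_steps n (foldr (\<circ>) (t # ts) id) \<le> sort_steps n (foldr (\<circ>) ts id) + 1" .
  moreover have "sort_steps n (foldr (\<circ>) ts id) \<le> length ts"
    using Cons.prems by (intro Cons.IH) simp
  ultimately show ?case
    unfolding length_Cons by linarith
qed (simp add: id_def sort_steps_id[unfolded id_def])

lemma T_alt_mono: "n \<le> N \<Longrightarrow> T_alt n \<subseteq> T_alt N"
  unfolding T_alt_def by fastforce

lemma transpose_12_comp_in_T_alt:
  assumes "i \<in> {1..n}" "j \<in> {1..n}" "i \<noteq> j"
  shows "tr 1 2 \<circ> tr i j \<in> T_alt n"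
proof (cases "i < j")
  case False
  then have "tr i j = tr j i"
    by (simp add: transpose_commute)
  with False assms show ?thesis
    unfolding T_alt_def by force
qed (use assms in \<open>auto simp: T_alt_def\<close>)

lemma transpose_top_eq_T_alt_comp:
  assumes "2 \<le> n" "k \<in> {1..n}"
  obtains t where "t \<in> T_alt (Suc n)" "tr (Suc n) k \<circ> q = t \<circ> (tr 1 2 \<circ> q)"
proof
  define N where "N = Suc n"
  show "tr 1 2 \<circ> tr N (tr 1 2 k) \<in> T_alt N"
    using assms by (intro transpose_12_comp_in_T_alt) (auto simp: N_def Transposition.transpose_def)
  have "tr 1 2 \<circ> tr N (tr 1 2 k) \<circ> (tr 1 2 \<circ> q)
      = tr 1 2 \<circ> (tr N (tr 1 2 k) \<circ> (tr 1 2 \<circ> q))"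
    by (simp add: comp_assoc)
  also have "\<dots> = tr N k \<circ> (tr 1 2 \<circ> (tr 1 2 \<circ> q))"
    using assms(1) by (subst transpose_comp_transpose_comp) (auto simp: N_def)
  finally show "tr N k \<circ> q = tr 1 2 \<circ> tr N (tr 1 2 k) \<circ> (tr 1 2 \<circ> q)"
    by (simp flip: comp_assoc)
qed

lemma sort_steps_word:
  assumes "2 \<le> n" "v permutes {1..n}" "evenperm v"
  shows "\<exists>ts. length ts = sort_steps n v \<and> set ts \<subseteq> T_alt n \<and> v = foldr (\<circ>) ts id"
  using assms
proof (induction n arbitrary: v rule: nat_induct_at_least)
  case base
  then have "v = id"
    using permutes_1_2 by (auto simp: evenperm_swap)
  then show ?case
    by (intro exI[of _ "[]"]) (simp add: sort_steps_le_2)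
next
  case (Suc n)
  define N k q where "N = Suc n" and "k = v N" and "q = tr N k \<circ> v"
  have v: "v = tr N k \<circ> q"
    by (simp add: q_def flip: comp_assoc)
  have q: "q permutes {1..n}"
    using permutes_insert_lemma[of v N "{1..n}"] Suc.prems(1)
    by (simp add: N_def k_def q_def atLeastAtMostSuc_conv insert_commute)
  have k: "k \<in> {1..N}"
    using permutes_in_image[OF Suc.prems(1), of N] by (simp add: k_def N_def)
  have steps: "sort_steps N v = sort_steps n q + of_bool (k \<noteq> N)"
    using Suc.hyps by (simp add: N_def k_def q_def sort_steps_Suc)
  have T_mono: "T_alt n \<subseteq> T_alt N"
    by (simp add: N_def T_alt_mono)
  have even_q: "evenperm q \<longleftrightarrow> k = N"
    using Suc.prems(2) evenperm_transpose_comp[of q N k] q unfolding v[symmetric]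
    by (auto simp: permutation_permutes)
  show ?case
  proof (cases "k = N")
    case True
    then obtain ts
      where ts: "length ts = sort_steps n q" "set ts \<subseteq> T_alt n" "q = foldr (\<circ>) ts id"
      using Suc.IH[OF q] even_q by blast
    then have "length ts = sort_steps N v" "set ts \<subseteq> T_alt N" "v = foldr (\<circ>) ts id"
      using True T_mono steps v by auto
    then show ?thesis
      unfolding N_def by blast
  next
    case False
    define w where "w = tr 1 2 \<circ> q"
    have "w permutes {1..n}"
      using permutes_compose[OF q permutes_swap_id[of 1 "{1..n}" 2]] Suc.hyps
      unfolding w_def by simp
    moreover have "evenperm w"
      using q False even_q evenperm_transpose_comp[of q 1 2]
      unfolding w_def by (auto simp: permutation_permutes)
    ultimately obtain ts
      where ts: "length ts = sort_steps n w" "set ts \<subseteq> T_alt n" "w = foldr (\<circ>) ts id"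
      using Suc.IH by blast
    have "k \<in> {1..n}"
      using k False by (auto simp: N_def)
    with Suc.hyps obtain t where t: "t \<in> T_alt N" "v = t \<circ> w"
      unfolding v w_def N_def by (rule transpose_top_eq_T_alt_comp)
    moreover have "sort_steps N v = length ts + 1"
      using ts(1) False by (simp add: steps w_def sort_steps_transpose_low)
    ultimately have "length (t # ts) = sort_steps N v"
      "set (t # ts) \<subseteq> T_alt N" "v = foldr (\<circ>) (t # ts) id"
      using ts T_mono by auto
    then show ?thesis
      unfolding N_def by blast
  qed
qed

lemma len_T_eq_sort_steps:
  assumes "2 \<le> n" "v \<in> alt_group n"
  shows "len_T n v = sort_steps n v"
  unfolding len_T_def
proof (rule Least_equality)
  show "\<exists>ts. length ts = sort_steps n v \<and> set ts \<subseteq> T_alt n \<and> v = foldr (\<circ>) ts id"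
    using assms by (intro sort_steps_word) (auto simp: alt_group_def)
  show "sort_steps n v \<le> r"
    if "\<exists>ts. length ts = r \<and> set ts \<subseteq> T_alt n \<and> v = foldr (\<circ>) ts id" for r
    using that sort_steps_le_length by blast
qed

text \<open>
  Odd permutations must be carried along: splitting off the transposition that fixes the top
  point flips the parity.
\<close>
definition parity_sum :: "nat \<Rightarrow> (nat \<Rightarrow> real) \<Rightarrow> bool \<Rightarrow> real" where
  "parity_sum n F e = (\<Sum>p | p permutes {1..n}. if evenperm p = e then F (sort_steps n p) else 0)"

lemma parity_sum_Suc:
  assumes "2 \<le> n"
  shows "parity_sum (Suc n) F e = parity_sum n F e + real n * parity_sum n (\<lambda>x. F (Suc x)) (\<not> e)"
proof -
  let ?P = "{p. p permutes {1..n}}"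
  let ?f = "\<lambda>p. if evenperm p = e then F (sort_steps (Suc n) p) else 0"
  have split: "?f (tr (Suc n) b \<circ> q)
      = (if evenperm q = ((Suc n = b) = e) then F (sort_steps n q + of_bool (b \<noteq> Suc n)) else 0)"
    if "q \<in> ?P" for b q
  proof -
    have "q (Suc n) = Suc n" "permutation q"
      using that by (auto simp: permutes_not_in permutation_permutes)
    then show ?thesis
      using assms by (auto simp: evenperm_transpose_comp sort_steps_transpose_top)
  qed
  have "{1..Suc n} = insert (Suc n) {1..n}"
    by auto
  then have "parity_sum (Suc n) F e
      = (\<Sum>b\<in>insert (Suc n) {1..n}. \<Sum>q\<in>?P. ?f (tr (Suc n) b \<circ> q))"
    unfolding parity_sum_def by (simp only:) (rule sum_over_permutations_insert, auto)
  also have "\<dots> = (\<Sum>q\<in>?P. ?f (tr (Suc n) (Suc n) \<circ> q))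
      + (\<Sum>b\<in>{1..n}. \<Sum>q\<in>?P. ?f (tr (Suc n) b \<circ> q))"
    by (rule sum.insert) auto
  also have "\<dots> = parity_sum n F e + (\<Sum>b\<in>{1..n}. parity_sum n (\<lambda>x. F (Suc x)) (\<not> e))"
    unfolding parity_sum_def
    by (intro arg_cong2[where f = "(+)"] sum.cong) (auto simp: split simp del: transpose_same)
  finally show ?thesis
    by simp
qed

lemma parity_sum_2: "parity_sum 2 F e = F 0"
proof -
  have "id \<noteq> tr (1::nat) 2"
    using transpose_eq_id_iff[of "1::nat" 2] by auto
  then show ?thesis
    unfolding parity_sum_def permutes_1_2 by (cases e) (auto simp: sort_steps_le_2 evenperm_swap)
qed

lemma parity_sum_even_eq_odd: "2 \<le> n \<Longrightarrow> parity_sum n F True = parity_sum n F False"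
proof (induction n arbitrary: F rule: nat_induct_at_least)
  case (Suc n)
  then show ?case
    by (simp add: parity_sum_Suc)
qed (simp add: parity_sum_2)

lemma parity_sum_even_Suc:
  "2 \<le> n \<Longrightarrow>
    parity_sum (Suc n) F True = parity_sum n F True + real n * parity_sum n (\<lambda>x. F (Suc x)) True"
  by (simp add: parity_sum_Suc parity_sum_even_eq_odd)

lemma parity_sum_add: "parity_sum n (\<lambda>x. F x + G x) e = parity_sum n F e + parity_sum n G e"
  unfolding parity_sum_def sum.distrib[symmetric] by (rule sum.cong) auto

lemma parity_sum_mult: "parity_sum n (\<lambda>x. c * F x) e = c * parity_sum n F e"
  unfolding parity_sum_def sum_distrib_left by (rule sum.cong) auto

lemma sum_alt_group_len_T:
  assumes "2 \<le> n"
  shows "(\<Sum>v\<in>alt_group n. F (len_T n v)) = parity_sum n F True"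
proof -
  have "alt_group n = {p \<in> {p. p permutes {1..n}}. evenperm p}"
    by (auto simp: alt_group_def)
  then have "(\<Sum>v\<in>alt_group n. F (sort_steps n v)) = parity_sum n F True"
    unfolding parity_sum_def eq_True by (simp only:) (rule sum.inter_filter, simp add: finite_permutations)
  then show ?thesis
    using assms by (simp add: len_T_eq_sort_steps)
qed

lemma H2_Suc: "H2 (Suc n) = H2 n + 1 / (real (Suc n))^2"
  by (simp add: H2_def)

lemma parity_sum_count:
  "2 \<le> n \<Longrightarrow> parity_sum n (\<lambda>_. 1) True = fact n / 2"
proof (induction n rule: nat_induct_at_least)
  case (Suc n)
  then show ?case
    by (simp add: parity_sum_even_Suc algebra_simps)
qed (simp add: parity_sum_2)

lemma parity_sum_mean:
  "2 \<le> n \<Longrightarrow> parity_sum n real True = fact n / 2 * (real n - harm n - 1/2)"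
proof (induction n rule: nat_induct_at_least)
  case base
  then show ?case
    by (simp add: parity_sum_2 harm_expand)
next
  case (Suc n)
  have "(\<lambda>x. real (Suc x)) = (\<lambda>x. real x + 1)"
    by auto
  then have "parity_sum (Suc n) real True
      = parity_sum n real True + real n * (parity_sum n real True + parity_sum n (\<lambda>_. 1) True)"
    using Suc.hyps by (simp add: parity_sum_even_Suc parity_sum_add)
  also have "\<dots> = fact (Suc n) / 2 * (real (Suc n) - harm (Suc n) - 1/2)"
    unfolding Suc.IH parity_sum_count[OF Suc.hyps] by (simp add: harm_Suc field_simps)
  finally show ?case .
qed

lemma parity_sum_square:
  "2 \<le> n \<Longrightarrow> parity_sum n (\<lambda>x. (real x)^2) True
     = fact n / 2 * (harm n - H2 n - 1/4 + (real n - harm n - 1/2)^2)"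
proof (induction n rule: nat_induct_at_least)
  case base
  have "H2 2 = 5/4"
    using H2_Suc[of 0] H2_Suc[of 1] by (simp add: H2_def numeral_2_eq_2)
  then show ?case
    by (simp add: parity_sum_2 harm_expand)
next
  case (Suc n)
  define x m V where "x = real (Suc n)" and "m = real n - harm n - 1/2" and "V = harm n - H2 n - 1/4"
  define p where "p = (x - 1) / x"
    \<comment> \<open>probability that the new top point must be swapped\<close>
  have x: "x \<noteq> 0" "real n = x - 1"
    by (simp_all add: x_def)
  have var: "harm (Suc n) - H2 (Suc n) - 1/4 = V + p * (1 - p)"
    unfolding harm_Suc H2_Suc x_def[symmetric] using x(1)
    by (simp add: V_def p_def field_simps power2_eq_square)
  have mean: "real (Suc n) - harm (Suc n) - 1/2 = m + p"
    unfolding harm_Suc x_def[symmetric] m_def x(2) using x(1)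
    by (simp add: p_def field_simps)
  have "(\<lambda>k. (real (Suc k))^2) = (\<lambda>k. (real k)^2 + 2 * real k + 1)"
    by (auto simp: power2_eq_square algebra_simps)
  then have "parity_sum (Suc n) (\<lambda>k. (real k)^2) True
      = parity_sum n (\<lambda>k. (real k)^2) True + real n * (parity_sum n (\<lambda>k. (real k)^2) True
          + 2 * parity_sum n real True + parity_sum n (\<lambda>_. 1) True)"
    using Suc.hyps by (simp add: parity_sum_even_Suc parity_sum_add parity_sum_mult)
  also have "\<dots> = fact n / 2 * (x * (V + m^2) + 2 * m * (x - 1) + (x - 1))"
    unfolding Suc.IH parity_sum_mean[OF Suc.hyps] parity_sum_count[OF Suc.hyps]
      m_def[symmetric] V_def[symmetric]
    by (simp add: x(2) field_simps)
  also have "\<dots> = fact n / 2 * (x * (V + m^2) + 2 * m * (x * p) + x * p)"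
    using x(1) by (simp add: p_def)
  also have "\<dots> = fact (Suc n) / 2 * (V + p * (1 - p) + (m + p)^2)"
    by (simp add: x_def power2_eq_square field_simps)
  finally show ?case
    unfolding var mean .
qed

theorem theorem8p4:
  fixes n :: nat
  assumes "n \<ge> 2"
  shows "E_alt n (\<lambda>v. real (len_T n v)) = real n - harm n - 1/2
       \<and> Var_alt n (\<lambda>v. real (len_T n v)) = harm n - H2 n - 1/4"
proof -
  have card: "real (card (alt_group n)) = fact n / 2"
    using sum_alt_group_len_T[OF assms, of "\<lambda>_. 1"] parity_sum_count[OF assms] by simp
  have mean: "E_alt n (\<lambda>v. real (len_T n v)) = real n - harm n - 1/2"
    unfolding E_alt_def card sum_alt_group_len_T[OF assms, of real] parity_sum_mean[OF assms]
    by simp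
  have "E_alt n (\<lambda>v. (real (len_T n v))^2) = harm n - H2 n - 1/4 + (real n - harm n - 1/2)^2"
    unfolding E_alt_def card sum_alt_group_len_T[OF assms, of "\<lambda>k. (real k)^2"]
      parity_sum_square[OF assms]
    by simp
  with mean show ?thesis
    unfolding Var_alt_def by simp
qed

end
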